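(* For every $\omega\in\mathcal{B}(\mathcal{H})_*$, $$S\bigl((\omega\otimes\mathrm{id})(U_A)\bigr)=(\omega\otimes\mathrm{id})(U_A^* ).$$ Explicitly, if $\xi,\eta\in\mathcal{H}$ and $(\omega_{\xi,\eta}\otimes\mathrm{id})(U_A)=L_f$, then $(\omega_{\xi,\eta}\otimes\mathrm{id})(U_A^* )=L_{Sf}$ with $(Sf)(x,y,r)=(e^{2\lambda r})^n\,\bar e[\eta_\lambda(r)\beta(x,y)]\,f(-e^{\lambda r}x,-e^{\lambda r}y,-r)$.
   Context: Fix an integer $n\ge1$ and a real constant $\lambda\neq0$. Points of $\mathbb{R}^{2n+1}$ are written $(x,y,r)$ with $x,y\in\mathbb{R}^n$, $r\in\mathbb{R}$; $\beta$ is the standard inner product on $\mathbb{R}^n$, $\bar e(t)=e^{-2\pi i t}$, $\eta_\lambda(r)=\frac{e^{2\lambda r}-1}{2\lambda}$, $\mathcal{H}=L^2(\mathbb{R}^{2n+1})$, $\mathcal{B}(\mathcal{H})_*$ the predual of $\mathcal{B}(\mathcal{H})$, $\omega_{\xi,\eta}(T)=\langle T\xi,\eta\rangle$. For $f$ in $L^1$-type function classes (in particular Schwartz functions with compact $r$-support), $L_f\in\mathcal{B}(\mathcal{H})$ is $(L_f\zeta)(x,y,r)=\int f(\tilde x,\tilde y,r)\zeta(x-\tilde x,y-\tilde y,r)\bar e[\eta_\lambda(r)\beta(\tilde x,y-\tilde y)]\,d\tilde x\,d\tilde y$, and $A$ is the norm closure of such $L_f$. $U_A$ is the unitary on $\mathcal{H}\otimes\mathcal{H}$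 given by $U_A\xi(x,y,r,x',y',r')=(e^{-\lambda r'})^n\bar e[\eta_\lambda(r')\beta(e^{-\lambda r'}x,y'-e^{-\lambda r'}y)]\,\xi(e^{-\lambda r'}x,e^{-\lambda r'}y,r+r',x'-e^{-\lambda r'}x,y'-e^{-\lambda r'}y,r')$; one has $(\omega\otimes\mathrm{id})(U_A)\in A$. $S$ is the anti-automorphism of $A$ given by $S(a)=\hat Ja^*\hat J$, where $\hat J\xi(x,y,r)=(e^{\lambda r})^n\overline{\xi(e^{\lambda r}x,e^{\lambda r}y,-r)}$. *)

theory Defs
  imports "HOL-Analysis.Analysis"
begin

text \<open>Points of R^(2n+1) are triples (x,y,r) with x,y in real^'n (n = CARD('n)).
  Elements of H = L^2(R^(2n+1)) are represented by square-integrable functions.\<close>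

type_synonym 'n pt = "(real^'n) \<times> (real^'n) \<times> real"

definition ebar :: "real \<Rightarrow> complex" where
  "ebar t = cis (- 2 * pi * t)"

definition eta_lam :: "real \<Rightarrow> real \<Rightarrow> real" where
  "eta_lam lam r = (exp (2 * lam * r) - 1) / (2 * lam)"

definition beta :: "real^('n::finite) \<Rightarrow> real^'n \<Rightarrow> real" where
  "beta x y = x \<bullet> y"

definition L2 :: "('a::euclidean_space \<Rightarrow> complex) \<Rightarrow> bool" where
  "L2 f \<longleftrightarrow> f \<in> borel_measurable lborel \<and> integrable lborel (\<lambda>p. (cmod (f p))^2)"

definition L2norm :: "('a::euclidean_space \<Rightarrow> complex) \<Rightarrow> real" where
  "L2norm f = sqrt (integral\<^sup>L lborel (\<lambda>p. (cmod (f p))^2))"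

text \<open>Inner product of L^2 (linear in the first variable).\<close>
definition ip :: "('a::euclidean_space \<Rightarrow> complex) \<Rightarrow> ('a \<Rightarrow> complex) \<Rightarrow> complex" where
  "ip f g = integral\<^sup>L lborel (\<lambda>p. f p * cnj (g p))"

definition tensor :: "('a \<Rightarrow> complex) \<Rightarrow> ('b \<Rightarrow> complex) \<Rightarrow> ('a \<times> 'b \<Rightarrow> complex)" where
  "tensor f g = (\<lambda>(p, q). f p * g q)"

definition UA :: "real \<Rightarrow> (('n::finite) pt \<times> ('n::finite) pt \<Rightarrow> complex) \<Rightarrow> (('n::finite) pt \<times> ('n::finite) pt \<Rightarrow> complex)" where
  "UA lam \<xi> = (\<lambda>((x, y, r), (x', y', r')).
     let e = exp (- lam * r') in
       complex_of_real (e ^ CARD('n))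
       * ebar (eta_lam lam r' * beta (e *\<^sub>R x) (y' - e *\<^sub>R y))
       * \<xi> ((e *\<^sub>R x, e *\<^sub>R y, r + r'), (x' - e *\<^sub>R x, y' - e *\<^sub>R y, r')))"

definition Jhat :: "real \<Rightarrow> (('n::finite) pt \<Rightarrow> complex) \<Rightarrow> (('n::finite) pt \<Rightarrow> complex)" where
  "Jhat lam \<xi> = (\<lambda>(x, y, r).
     let e = exp (lam * r) in
       complex_of_real (e ^ CARD('n)) * cnj (\<xi> (e *\<^sub>R x, e *\<^sub>R y, - r)))"

definition Lf :: "real \<Rightarrow> (('n::finite) pt \<Rightarrow> complex) \<Rightarrow> (('n::finite) pt \<Rightarrow> complex) \<Rightarrow> (('n::finite) pt \<Rightarrow> complex)" where
  "Lf lam f \<zeta> = (\<lambda>(x, y, r).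
     integral\<^sup>L (lborel :: ((real^'n) \<times> (real^'n)) measure)
       (\<lambda>(xt, yt). f (xt, yt, r) * \<zeta> (x - xt, y - yt, r)
                    * ebar (eta_lam lam r * beta xt (y - yt))))"

text \<open>L^1-type class of functions f: measurable, f(.,.,r) integrable for every r,
  with L^1(R^2n)-norm bounded uniformly in r (contains the Schwartz functions with
  compact r-support).\<close>
definition L1type :: "(('n::finite) pt \<Rightarrow> complex) \<Rightarrow> bool" where
  "L1type f \<longleftrightarrow> f \<in> borel_measurable lborel
     \<and> (\<forall>r. integrable (lborel :: ((real^'n) \<times> (real^'n)) measure) (\<lambda>(a, b). f (a, b, r)))
     \<and> (\<exists>C. \<forall>r. integral\<^sup>L (lborel :: ((real^'n) \<times> (real^'n)) measure)
                     (\<lambda>(a, b). cmod (f (a, b, r))) \<le> C)"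

definition Sfun :: "real \<Rightarrow> (('n::finite) pt \<Rightarrow> complex) \<Rightarrow> (('n::finite) pt \<Rightarrow> complex)" where
  "Sfun lam f = (\<lambda>(x, y, r).
     complex_of_real ((exp (2 * lam * r)) ^ CARD('n))
     * ebar (eta_lam lam r * beta x y)
     * f (- (exp (lam * r) *\<^sub>R x), - (exp (lam * r) *\<^sub>R y), - r))"

text \<open>Normal functionals on B(H): omega = sum_k omega_{xi_k, eta_k} with
  sum_k ||xi_k|| ||eta_k|| < infinity.\<close>
definition normal_rep :: "(nat \<Rightarrow> (('n::finite) pt \<Rightarrow> complex)) \<Rightarrow> (nat \<Rightarrow> (('n::finite) pt \<Rightarrow> complex)) \<Rightarrow> bool" where
  "normal_rep \<xi>s \<eta>s \<longleftrightarrow> (\<forall>k. L2 (\<xi>s k) \<and> L2 (\<eta>s k))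
     \<and> summable (\<lambda>k. L2norm (\<xi>s k) * L2norm (\<eta>s k))"

text \<open>X = (omega (x) id)(U_A), weakly: <X z, z'> = sum_k <U_A(xi_k (x) z), eta_k (x) z'>.\<close>
definition slice_UA :: "real \<Rightarrow> (nat \<Rightarrow> (('n::finite) pt \<Rightarrow> complex)) \<Rightarrow> (nat \<Rightarrow> (('n::finite) pt \<Rightarrow> complex))
    \<Rightarrow> ((('n::finite) pt \<Rightarrow> complex) \<Rightarrow> (('n::finite) pt \<Rightarrow> complex)) \<Rightarrow> bool" where
  "slice_UA lam \<xi>s \<eta>s X \<longleftrightarrow> (\<forall>\<zeta>. L2 \<zeta> \<longrightarrow> L2 (X \<zeta>))
     \<and> (\<forall>\<zeta> \<zeta>'. L2 \<zeta> \<longrightarrow> L2 \<zeta>' \<longrightarrow>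
          ip (X \<zeta>) \<zeta>' = (\<Sum>k. ip (UA lam (tensor (\<xi>s k) \<zeta>)) (tensor (\<eta>s k) \<zeta>')))"

text \<open>Y = (omega (x) id)(U_A^*), weakly:
  <Y z, z'> = sum_k <U_A^*(xi_k (x) z), eta_k (x) z'> = sum_k <xi_k (x) z, U_A(eta_k (x) z')>.\<close>
definition slice_UA_adj :: "real \<Rightarrow> (nat \<Rightarrow> (('n::finite) pt \<Rightarrow> complex)) \<Rightarrow> (nat \<Rightarrow> (('n::finite) pt \<Rightarrow> complex))
    \<Rightarrow> ((('n::finite) pt \<Rightarrow> complex) \<Rightarrow> (('n::finite) pt \<Rightarrow> complex)) \<Rightarrow> bool" where
  "slice_UA_adj lam \<xi>s \<eta>s Y \<longleftrightarrow> (\<forall>\<zeta>. L2 \<zeta> \<longrightarrow> L2 (Y \<zeta>))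
     \<and> (\<forall>\<zeta> \<zeta>'. L2 \<zeta> \<longrightarrow> L2 \<zeta>' \<longrightarrow>
          ip (Y \<zeta>) \<zeta>' = (\<Sum>k. ip (tensor (\<xi>s k) \<zeta>) (UA lam (tensor (\<eta>s k) \<zeta>'))))"

definition is_adjoint :: "((('n::finite) pt \<Rightarrow> complex) \<Rightarrow> (('n::finite) pt \<Rightarrow> complex))
    \<Rightarrow> ((('n::finite) pt \<Rightarrow> complex) \<Rightarrow> (('n::finite) pt \<Rightarrow> complex)) \<Rightarrow> bool" where
  "is_adjoint X Xs \<longleftrightarrow> (\<forall>\<zeta>. L2 \<zeta> \<longrightarrow> L2 (Xs \<zeta>))
     \<and> (\<forall>\<zeta> \<zeta>'. L2 \<zeta> \<longrightarrow> L2 \<zeta>' \<longrightarrow> ip (Xs \<zeta>) \<zeta>' = ip \<zeta> (X \<zeta>'))"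

end

theory Submission
  imports Defs
begin

text \<open>\<open>J\<close> is complex conjugation twisted by the substitution
  \<open>(x, y, r) \<mapsto> (exp(\<lambda>r) x, exp(\<lambda>r) y, -r)\<close>, weighted by the square root of its Jacobian; hence
  \<open>\<langle>J a, b\<rangle> = \<langle>J b, a\<rangle>\<close>. Performing this substitution in the second leg and the dilation
  \<open>(x, y, r) \<mapsto> (exp(\<lambda>s) x, exp(\<lambda>s) y, r - s)\<close> in the first leg (\<open>s\<close> the last coordinate of the second
  leg) transforms \<open>\<langle>U\<^sub>A(a \<otimes> J \<zeta>'), b \<otimes> J \<zeta>\<rangle>\<close> into \<open>\<langle>a \<otimes> \<zeta>, U\<^sub>A(b \<otimes> \<zeta>')\<rangle>\<close>. Slicing
  with \<open>\<omega>\<close> gives \<open>J X\<^sup>* J = Y\<close> weakly. When \<open>X = L\<^sub>f\<close>, the same substitution together with a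
  shear in the convolution variable turns \<open>\<langle>L\<^sub>f (J \<zeta>'), J \<zeta>\<rangle>\<close> into
  \<open>\<langle>L\<^bsub>Sf\<^esub> \<zeta>, \<zeta>'\<rangle>\<close>. In both cases the phase factors match by the identity
  \<open>\<eta>\<^sub>\<lambda>(-s) exp(2\<lambda>s) = -\<eta>\<^sub>\<lambda>(s)\<close>.\<close>

lemma measurable_Pair_borel[measurable (raw)]:
  "f \<in> M \<rightarrow>\<^sub>M (borel :: 'a::second_countable_topology measure) \<Longrightarrow>
   g \<in> M \<rightarrow>\<^sub>M (borel :: 'b::second_countable_topology measure) \<Longrightarrow>
   (\<lambda>x. (f x, g x)) \<in> M \<rightarrow>\<^sub>M (borel :: ('a \<times> 'b) measure)"
  unfolding borel_prod[symmetric] by measurable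

lemma measurable_fst_borel[measurable]:
  "fst \<in> (borel :: ('a::second_countable_topology \<times> 'b::second_countable_topology) measure) \<rightarrow>\<^sub>M borel"
  unfolding borel_prod[symmetric] by measurable

lemma measurable_snd_borel[measurable]:
  "snd \<in> (borel :: ('a::second_countable_topology \<times> 'b::second_countable_topology) measure) \<rightarrow>\<^sub>M borel"
  unfolding borel_prod[symmetric] by measurable

lemma borel_measurable_cnj[measurable (raw)]:
  "f \<in> M \<rightarrow>\<^sub>M (borel :: complex measure) \<Longrightarrow> (\<lambda>x. cnj (f x)) \<in> M \<rightarrow>\<^sub>M borel"
  using measurable_compose[OF _ borel_measurable_continuous_onI[OF continuous_on_cnj[OF continuous_on_id]]] .

section \<open>Change of variables for Lebesgue measure\<close>

definition change_of_vars :: "('a::euclidean_space \<Rightarrow> 'a) \<Rightarrow> ('a \<Rightarrow> real) \<Rightarrow> bool" where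
  "change_of_vars \<Phi> j \<longleftrightarrow> \<Phi> \<in> borel_measurable borel \<and> j \<in> borel_measurable borel \<and> (\<forall>z. 0 \<le> j z)
     \<and> (\<forall>f::'a \<Rightarrow> ennreal. f \<in> borel_measurable borel \<longrightarrow>
          (\<integral>\<^sup>+z. ennreal (j z) * f (\<Phi> z) \<partial>lborel) = (\<integral>\<^sup>+z. f z \<partial>lborel))"

lemma change_of_vars_nn_integral:
  assumes "change_of_vars \<Phi> j" "f \<in> borel_measurable borel"
  shows "(\<integral>\<^sup>+z. ennreal (j z) * f (\<Phi> z) \<partial>lborel) = (\<integral>\<^sup>+z. f z \<partial>lborel)"
  using assms unfolding change_of_vars_def by blast

lemma change_of_vars_measurable:
  assumes "change_of_vars \<Phi> j"
  shows "\<Phi> \<in> borel_measurable borel" "j \<in> borel_measurable borel" "0 \<le> j z"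
  using assms unfolding change_of_vars_def by blast+

lemma change_of_vars_cong:
  assumes "change_of_vars \<Phi> j" "\<And>z. \<Phi> z = \<Phi>' z" "\<And>z. j z = j' z"
  shows "change_of_vars \<Phi>' j'"
proof -
  have "\<Phi> = \<Phi>'" "j = j'" using assms(2,3) by auto
  then show ?thesis using assms(1) by simp
qed

lemma change_of_vars_distr:
  assumes \<Phi>: "change_of_vars \<Phi> j"
  shows "distr (density lborel j) lborel \<Phi> = lborel"
proof (rule measure_eqI)
  note [measurable] = change_of_vars_measurable(1,2)[OF \<Phi>]
  fix A assume "A \<in> sets (distr (density lborel j) lborel \<Phi>)"
  then have A: "A \<in> sets borel" by simp
  then have A': "\<Phi> -` A \<in> sets borel" by (rule measurable_sets_borel[rotated]) measurable
  have "emeasure (distr (density lborel j) lborel \<Phi>) A = emeasure (density lborel j) (\<Phi> -` A)"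
    using A by (subst emeasure_distr) auto
  also have "\<dots> = (\<integral>\<^sup>+z. ennreal (j z) * indicator (\<Phi> -` A) z \<partial>lborel)"
    using A' by (subst emeasure_density) (auto intro: nn_integral_cong)
  also have "\<dots> = (\<integral>\<^sup>+z. ennreal (j z) * indicator A (\<Phi> z) \<partial>lborel)"
    by (auto intro!: nn_integral_cong split: split_indicator)
  also have "\<dots> = emeasure lborel A"
    using A by (simp add: change_of_vars_nn_integral[OF \<Phi>])
  finally show "emeasure (distr (density lborel j) lborel \<Phi>) A = emeasure lborel A" .
qed simp

lemma
  fixes g :: "'a::euclidean_space \<Rightarrow> 'b::{banach, second_countable_topology}"
  assumes \<Phi>: "change_of_vars \<Phi> j" and [measurable]: "g \<in> borel_measurable borel"
  shows change_of_vars_integral: "integral\<^sup>L lborel g = integral\<^sup>L lborel (\<lambda>z. j z *\<^sub>R g (\<Phi> z))"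
    and change_of_vars_integrable_iff:
      "integrable lborel g \<longleftrightarrow> integrable lborel (\<lambda>z. j z *\<^sub>R g (\<Phi> z))"
proof -
  note [measurable] = change_of_vars_measurable(1,2)[OF \<Phi>]
  have j: "\<And>z. 0 \<le> j z" by (rule change_of_vars_measurable(3)[OF \<Phi>])
  have "integral\<^sup>L lborel g = integral\<^sup>L (distr (density lborel j) lborel \<Phi>) g"
    by (simp add: change_of_vars_distr[OF \<Phi>])
  also have "\<dots> = integral\<^sup>L (density lborel j) (\<lambda>z. g (\<Phi> z))"
    by (subst integral_distr) auto
  also have "\<dots> = integral\<^sup>L lborel (\<lambda>z. j z *\<^sub>R g (\<Phi> z))"
    using j by (subst integral_density) auto
  finally show "integral\<^sup>L lborel g = integral\<^sup>L lborel (\<lambda>z. j z *\<^sub>R g (\<Phi> z))" .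
  have "integrable lborel g \<longleftrightarrow> integrable (distr (density lborel j) lborel \<Phi>) g"
    by (simp add: change_of_vars_distr[OF \<Phi>])
  also have "\<dots> \<longleftrightarrow> integrable (density lborel j) (\<lambda>z. g (\<Phi> z))"
    by (subst integrable_distr_eq) auto
  also have "\<dots> \<longleftrightarrow> integrable lborel (\<lambda>z. j z *\<^sub>R g (\<Phi> z))"
    using j by (subst integrable_density) auto
  finally show "integrable lborel g \<longleftrightarrow> integrable lborel (\<lambda>z. j z *\<^sub>R g (\<Phi> z))" .
qed

lemma change_of_vars_compose:
  assumes \<Phi>1: "change_of_vars \<Phi>1 j1" and \<Phi>2: "change_of_vars \<Phi>2 j2"
  shows "change_of_vars (\<lambda>z. \<Phi>1 (\<Phi>2 z)) (\<lambda>z. j2 z * j1 (\<Phi>2 z))"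
  unfolding change_of_vars_def
proof (intro conjI allI impI)
  note [measurable] = change_of_vars_measurable(1,2)[OF \<Phi>1] change_of_vars_measurable(1,2)[OF \<Phi>2]
  note j = change_of_vars_measurable(3)[OF \<Phi>1] change_of_vars_measurable(3)[OF \<Phi>2]
  show "(\<lambda>z. \<Phi>1 (\<Phi>2 z)) \<in> borel_measurable borel" by measurable
  show "(\<lambda>z. j2 z * j1 (\<Phi>2 z)) \<in> borel_measurable borel" by measurable
  show "0 \<le> j2 z * j1 (\<Phi>2 z)" for z using j by simp
  fix f :: "'a \<Rightarrow> ennreal" assume [measurable]: "f \<in> borel_measurable borel"
  have "(\<integral>\<^sup>+z. ennreal (j2 z * j1 (\<Phi>2 z)) * f (\<Phi>1 (\<Phi>2 z)) \<partial>lborel)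
      = (\<integral>\<^sup>+z. ennreal (j2 z) * (ennreal (j1 (\<Phi>2 z)) * f (\<Phi>1 (\<Phi>2 z))) \<partial>lborel)"
    using j by (intro nn_integral_cong) (simp add: ennreal_mult mult.assoc)
  also have "\<dots> = (\<integral>\<^sup>+z. ennreal (j1 z) * f (\<Phi>1 z) \<partial>lborel)"
    by (rule change_of_vars_nn_integral[OF \<Phi>2, of "\<lambda>z. ennreal (j1 z) * f (\<Phi>1 z)"]) measurable
  also have "\<dots> = (\<integral>\<^sup>+z. f z \<partial>lborel)"
    by (rule change_of_vars_nn_integral[OF \<Phi>1]) measurable
  finally show "(\<integral>\<^sup>+z. ennreal (j2 z * j1 (\<Phi>2 z)) * f (\<Phi>1 (\<Phi>2 z)) \<partial>lborel) = (\<integral>\<^sup>+z. f z \<partial>lborel)" .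
qed

lemma change_of_vars_affine:
  fixes t :: "'a::euclidean_space"
  assumes "c \<noteq> 0"
  shows "change_of_vars (\<lambda>x. t + c *\<^sub>R x) (\<lambda>_. \<bar>c\<bar> ^ DIM('a))"
  unfolding change_of_vars_def
proof (intro conjI allI impI)
  fix f :: "'a \<Rightarrow> ennreal" assume [measurable]: "f \<in> borel_measurable borel"
  show "(\<integral>\<^sup>+z. ennreal (\<bar>c\<bar> ^ DIM('a)) * f (t + c *\<^sub>R z) \<partial>lborel) = (\<integral>\<^sup>+z. f z \<partial>lborel)"
    by (subst (2) lborel_affine[OF assms, of t]) (simp add: nn_integral_density nn_integral_distr)
qed simp_all

lemma change_of_vars_id: "change_of_vars (\<lambda>x. x) (\<lambda>_. 1)"
  using change_of_vars_affine[of 1 0] by simp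

lemma change_of_vars_scaleR_exp:
  "change_of_vars (\<lambda>y::real^'n::finite. exp a *\<^sub>R y) (\<lambda>_. exp a ^ CARD('n))"
  using change_of_vars_affine[of "exp a" "0::real^'n"] by simp

lemma change_of_vars_fibrewise_fst:
  fixes \<phi> :: "'b::euclidean_space \<Rightarrow> 'a::euclidean_space \<Rightarrow> 'a"
  assumes \<phi>: "\<And>b. change_of_vars (\<phi> b) (j b)"
    and m: "(\<lambda>(a, b). \<phi> b a) \<in> borel_measurable borel" "(\<lambda>(a, b). j b a) \<in> borel_measurable borel"
  shows "change_of_vars (\<lambda>(a, b). (\<phi> b a, b)) (\<lambda>(a, b). j b a)"
  unfolding change_of_vars_def
proof (intro conjI allI impI)
  have [measurable]: "(\<lambda>z. \<phi> (snd z) (fst z)) \<in> borel_measurable borel"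
    "(\<lambda>z. j (snd z) (fst z)) \<in> borel_measurable borel"
    using m by (simp_all add: case_prod_beta')
  show "(\<lambda>(a, b). (\<phi> b a, b)) \<in> borel_measurable borel" unfolding case_prod_beta' by measurable
  show "(\<lambda>(a, b). j b a) \<in> borel_measurable borel" by (rule m(2))
  show "0 \<le> (case z of (a, b) \<Rightarrow> j b a)" for z
    using change_of_vars_measurable(3)[OF \<phi>] by (simp split: prod.split)
  fix f :: "'a \<times> 'b \<Rightarrow> ennreal" assume [measurable]: "f \<in> borel_measurable borel"
  have "(\<integral>\<^sup>+z. ennreal (case z of (a, b) \<Rightarrow> j b a) * f (case z of (a, b) \<Rightarrow> (\<phi> b a, b)) \<partial>lborel)
      = (\<integral>\<^sup>+z. ennreal (j (snd z) (fst z)) * f (\<phi> (snd z) (fst z), snd z) \<partial>(lborel \<Otimes>\<^sub>M lborel))"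
    by (simp add: lborel_prod case_prod_beta')
  also have "\<dots> = (\<integral>\<^sup>+b. \<integral>\<^sup>+a. ennreal (j b a) * f (\<phi> b a, b) \<partial>lborel \<partial>lborel)"
  proof -
    have "(\<lambda>z. ennreal (j (snd z) (fst z)) * f (\<phi> (snd z) (fst z), snd z)) \<in> borel_measurable (lborel \<Otimes>\<^sub>M lborel)"
      unfolding lborel_prod by measurable
    from lborel_pair.nn_integral_snd[OF this] show ?thesis by simp
  qed
  also have "\<dots> = (\<integral>\<^sup>+b. \<integral>\<^sup>+a. f (a, b) \<partial>lborel \<partial>lborel)"
  proof (rule nn_integral_cong)
    fix b
    show "(\<integral>\<^sup>+a. ennreal (j b a) * f (\<phi> b a, b) \<partial>lborel) = (\<integral>\<^sup>+a. f (a, b) \<partial>lborel)"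
      by (rule change_of_vars_nn_integral[OF \<phi>[of b], of "\<lambda>a. f (a, b)"]) measurable
  qed
  also have "\<dots> = (\<integral>\<^sup>+z. f z \<partial>(lborel \<Otimes>\<^sub>M lborel))"
  proof -
    have "f \<in> borel_measurable (lborel \<Otimes>\<^sub>M lborel)" unfolding lborel_prod by measurable
    from lborel_pair.nn_integral_snd[OF this] show ?thesis by simp
  qed
  also have "\<dots> = (\<integral>\<^sup>+z. f z \<partial>lborel)" by (simp add: lborel_prod)
  finally show "(\<integral>\<^sup>+z. ennreal (case z of (a, b) \<Rightarrow> j b a) * f (case z of (a, b) \<Rightarrow> (\<phi> b a, b)) \<partial>lborel)
      = (\<integral>\<^sup>+z. f z \<partial>lborel)" .
qed

lemma change_of_vars_fibrewise_snd:
  fixes \<psi> :: "'a::euclidean_space \<Rightarrow> 'b::euclidean_space \<Rightarrow> 'b"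
  assumes \<psi>: "\<And>a. change_of_vars (\<psi> a) (k a)"
    and m: "(\<lambda>(a, b). \<psi> a b) \<in> borel_measurable borel" "(\<lambda>(a, b). k a b) \<in> borel_measurable borel"
  shows "change_of_vars (\<lambda>(a, b). (a, \<psi> a b)) (\<lambda>(a, b). k a b)"
  unfolding change_of_vars_def
proof (intro conjI allI impI)
  have [measurable]: "(\<lambda>z. \<psi> (fst z) (snd z)) \<in> borel_measurable borel"
    "(\<lambda>z. k (fst z) (snd z)) \<in> borel_measurable borel"
    using m by (simp_all add: case_prod_beta')
  show "(\<lambda>(a, b). (a, \<psi> a b)) \<in> borel_measurable borel" unfolding case_prod_beta' by measurable
  show "(\<lambda>(a, b). k a b) \<in> borel_measurable borel" by (rule m(2))
  show "0 \<le> (case z of (a, b) \<Rightarrow> k a b)" for z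
    using change_of_vars_measurable(3)[OF \<psi>] by (simp split: prod.split)
  fix f :: "'a \<times> 'b \<Rightarrow> ennreal" assume [measurable]: "f \<in> borel_measurable borel"
  have "(\<integral>\<^sup>+z. ennreal (case z of (a, b) \<Rightarrow> k a b) * f (case z of (a, b) \<Rightarrow> (a, \<psi> a b)) \<partial>lborel)
      = (\<integral>\<^sup>+z. ennreal (k (fst z) (snd z)) * f (fst z, \<psi> (fst z) (snd z)) \<partial>(lborel \<Otimes>\<^sub>M lborel))"
    by (simp add: lborel_prod case_prod_beta')
  also have "\<dots> = (\<integral>\<^sup>+a. \<integral>\<^sup>+b. ennreal (k a b) * f (a, \<psi> a b) \<partial>lborel \<partial>lborel)"
  proof -
    have "(\<lambda>z. ennreal (k (fst z) (snd z)) * f (fst z, \<psi> (fst z) (snd z))) \<in> borel_measurable (lborel \<Otimes>\<^sub>M lborel)"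
      unfolding lborel_prod by measurable
    from lborel.nn_integral_fst[OF this] show ?thesis by simp
  qed
  also have "\<dots> = (\<integral>\<^sup>+a. \<integral>\<^sup>+b. f (a, b) \<partial>lborel \<partial>lborel)"
  proof (rule nn_integral_cong)
    fix a
    show "(\<integral>\<^sup>+b. ennreal (k a b) * f (a, \<psi> a b) \<partial>lborel) = (\<integral>\<^sup>+b. f (a, b) \<partial>lborel)"
      by (rule change_of_vars_nn_integral[OF \<psi>[of a], of "\<lambda>b. f (a, b)"]) measurable
  qed
  also have "\<dots> = (\<integral>\<^sup>+z. f z \<partial>(lborel \<Otimes>\<^sub>M lborel))"
  proof -
    have "f \<in> borel_measurable (lborel \<Otimes>\<^sub>M lborel)" unfolding lborel_prod by measurable
    from lborel.nn_integral_fst[OF this] show ?thesis by simp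
  qed
  also have "\<dots> = (\<integral>\<^sup>+z. f z \<partial>lborel)" by (simp add: lborel_prod)
  finally show "(\<integral>\<^sup>+z. ennreal (case z of (a, b) \<Rightarrow> k a b) * f (case z of (a, b) \<Rightarrow> (a, \<psi> a b)) \<partial>lborel)
      = (\<integral>\<^sup>+z. f z \<partial>lborel)" .
qed

lemma change_of_vars_prod:
  fixes \<phi> :: "'a::euclidean_space \<Rightarrow> 'a" and \<psi> :: "'b::euclidean_space \<Rightarrow> 'b"
  assumes \<phi>: "change_of_vars \<phi> j" and \<psi>: "change_of_vars \<psi> k"
  shows "change_of_vars (\<lambda>(a, b). (\<phi> a, \<psi> b)) (\<lambda>(a, b). j a * k b)"
proof -
  note [measurable] = change_of_vars_measurable(1,2)[OF \<phi>] change_of_vars_measurable(1,2)[OF \<psi>]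
  have "change_of_vars (\<lambda>(a, b). (\<phi> a, b)) (\<lambda>(a, b). j a)"
    using change_of_vars_fibrewise_fst[of "\<lambda>_. \<phi>" "\<lambda>_. j"] \<phi> by (simp add: case_prod_beta')
  moreover have "change_of_vars (\<lambda>(a, b). (a, \<psi> b)) (\<lambda>(a, b). k b)"
    using change_of_vars_fibrewise_snd[of "\<lambda>_. \<psi>" "\<lambda>_. k"] \<psi> by (simp add: case_prod_beta')
  ultimately show ?thesis
    by (rule change_of_vars_cong[OF change_of_vars_compose]) (auto split: prod.split simp: mult.commute)
qed

section \<open>The antiunitary \<open>J\<close>\<close>

lemma L2_measurable: "L2 f \<Longrightarrow> f \<in> borel_measurable borel"
  unfolding L2_def by simp

lemma ip_commute: "ip a b = cnj (ip b a)"
proof -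
  have "(\<lambda>p. a p * cnj (b p)) = (\<lambda>p. cnj (b p * cnj (a p)))" by (simp add: mult.commute)
  then show ?thesis unfolding ip_def by (simp only: Bochner_Integration.integral_cnj)
qed

definition Jhat_map :: "real \<Rightarrow> ('n::finite) pt \<Rightarrow> 'n pt" where
  "Jhat_map lam = (\<lambda>(x, y, r). (exp (lam * r) *\<^sub>R x, exp (lam * r) *\<^sub>R y, - r))"

definition Jhat_jacobian :: "real \<Rightarrow> ('n::finite) pt \<Rightarrow> real" where
  "Jhat_jacobian lam = (\<lambda>(x, y, r). exp (lam * r) ^ (2 * CARD('n)))"

lemma change_of_vars_Jhat_map: "change_of_vars (Jhat_map lam :: ('n::finite) pt \<Rightarrow> _) (Jhat_jacobian lam)"
proof -
  have scale_snd: "change_of_vars (\<lambda>(x::real^'n, y::real^'n, r::real). (x, exp (lam * r) *\<^sub>R y, r))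
      (\<lambda>(x, y, r). exp (lam * r) ^ CARD('n))"
  proof -
    have "change_of_vars (\<lambda>(y::real^'n, r::real). (exp (lam * r) *\<^sub>R y, r)) (\<lambda>(y, r). exp (lam * r) ^ CARD('n))"
      by (rule change_of_vars_fibrewise_fst[OF change_of_vars_scaleR_exp]) (auto simp: case_prod_beta')
    then show ?thesis
      by (rule change_of_vars_cong[OF change_of_vars_fibrewise_snd]) (auto simp: case_prod_beta')
  qed
  have scale_fst: "change_of_vars (\<lambda>(x::real^'n, y::real^'n, r::real). (exp (lam * r) *\<^sub>R x, y, r))
      (\<lambda>(x, y, r). exp (lam * r) ^ CARD('n))"
    by (rule change_of_vars_cong[OF change_of_vars_fibrewise_fst[of "\<lambda>(y, r). (*\<^sub>R) (exp (lam * r))"]])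
      (auto simp: case_prod_beta' change_of_vars_scaleR_exp)
  have "change_of_vars (\<lambda>r::real. 0 + (-1) *\<^sub>R r) (\<lambda>_. \<bar>-1\<bar> ^ DIM(real))"
    by (rule change_of_vars_affine) simp
  then have flip: "change_of_vars (\<lambda>(x::real^'n, y::real^'n, r::real). (x, y, - r)) (\<lambda>_. 1)"
    by (rule change_of_vars_cong[OF change_of_vars_prod[OF change_of_vars_id change_of_vars_prod[OF change_of_vars_id]]]) auto
  show ?thesis
    by (rule change_of_vars_cong[OF change_of_vars_compose[OF flip change_of_vars_compose[OF scale_fst scale_snd]]])
      (auto simp: Jhat_map_def Jhat_jacobian_def power_add[symmetric] mult_2 split: prod.split)
qed

lemma Jhat_apply:
  "Jhat lam \<xi> (x, y, r) =
    complex_of_real (exp (lam * r) ^ CARD('n)) * cnj (\<xi> (exp (lam * r) *\<^sub>R x, exp (lam * r) *\<^sub>R y, - r))"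
  for \<xi> :: "('n::finite) pt \<Rightarrow> complex"
  unfolding Jhat_def Let_def by simp

lemma Jhat_map_apply: "Jhat_map lam (x, y, r) = (exp (lam * r) *\<^sub>R x, exp (lam * r) *\<^sub>R y, - r)"
  by (simp add: Jhat_map_def)

lemma Jhat_measurable[measurable]:
  fixes \<xi> :: "('n::finite) pt \<Rightarrow> complex"
  assumes [measurable]: "\<xi> \<in> borel_measurable borel"
  shows "Jhat lam \<xi> \<in> borel_measurable borel"
  unfolding Jhat_def Let_def case_prod_beta' by measurable

lemma Jhat_Jhat_map:
  "Jhat lam \<xi> (Jhat_map lam (x, y, r)) = complex_of_real (inverse (exp (lam * r)) ^ CARD('n)) * cnj (\<xi> (x, y, r))"
  for \<xi> :: "('n::finite) pt \<Rightarrow> complex"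
  by (simp add: Jhat_apply Jhat_map_apply exp_minus)

lemma L2_Jhat:
  fixes \<xi> :: "('n::finite) pt \<Rightarrow> complex"
  assumes "L2 \<xi>"
  shows "L2 (Jhat lam \<xi>)"
proof -
  have [measurable]: "\<xi> \<in> borel_measurable borel" using assms by (rule L2_measurable)
  have "(\<lambda>p. (cmod (Jhat lam \<xi> p))^2) = (\<lambda>p. Jhat_jacobian lam p *\<^sub>R (cmod (\<xi> (Jhat_map lam p)))^2)"
    by (auto simp: Jhat_apply Jhat_map_apply Jhat_jacobian_def norm_mult norm_power
        power_mult_distrib power_mult[symmetric] mult.commute)
  moreover have "integrable lborel (\<lambda>p. (cmod (\<xi> p))^2) \<longleftrightarrow>
      integrable lborel (\<lambda>p. Jhat_jacobian lam p *\<^sub>R (cmod (\<xi> (Jhat_map lam p)))^2)"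
    by (rule change_of_vars_integrable_iff[OF change_of_vars_Jhat_map]) measurable
  ultimately show ?thesis
    using assms unfolding L2_def by simp
qed

lemma ip_Jhat_swap:
  fixes a b :: "('n::finite) pt \<Rightarrow> complex"
  assumes [measurable]: "a \<in> borel_measurable borel" "b \<in> borel_measurable borel"
  shows "ip (Jhat lam a) b = ip (Jhat lam b) a"
proof -
  have "ip (Jhat lam a) b = (\<integral>p. Jhat_jacobian lam p *\<^sub>R (Jhat lam a (Jhat_map lam p) * cnj (b (Jhat_map lam p))) \<partial>lborel)"
    unfolding ip_def by (rule change_of_vars_integral[OF change_of_vars_Jhat_map]) measurable
  also have "\<dots> = ip (Jhat lam b) a"
    unfolding ip_def
  proof (rule Bochner_Integration.integral_cong[OF refl])
    fix p :: "'n pt"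
    obtain x y r where p: "p = (x, y, r)" by (cases p)
    have e: "exp (lam * r) ^ (2 * CARD('n)) * inverse (exp (lam * r)) ^ CARD('n) = exp (lam * r) ^ CARD('n)"
      by (simp add: mult_2 power_add mult.assoc flip: power_mult_distrib)
    have "Jhat_jacobian lam p *\<^sub>R (Jhat lam a (Jhat_map lam p) * cnj (b (Jhat_map lam p)))
        = complex_of_real (exp (lam * r) ^ (2 * CARD('n)) * inverse (exp (lam * r)) ^ CARD('n))
            * (cnj (a p) * cnj (b (Jhat_map lam p)))"
      unfolding p Jhat_Jhat_map Jhat_jacobian_def by (simp add: scaleR_conv_of_real mult.assoc)
    also have "\<dots> = Jhat lam b p * cnj (a p)"
      unfolding e unfolding p Jhat_apply Jhat_map_apply by simp
    finally show "Jhat_jacobian lam p *\<^sub>R (Jhat lam a (Jhat_map lam p) * cnj (b (Jhat_map lam p)))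
        = Jhat lam b p * cnj (a p)" .
  qed
  finally show ?thesis .
qed

lemma ebar_measurable[measurable]: "ebar \<in> borel_measurable borel"
  unfolding ebar_def by (intro borel_measurable_continuous_onI continuous_intros)

lemma eta_lam_measurable[measurable]: "eta_lam lam \<in> borel_measurable borel"
  unfolding eta_lam_def by measurable

lemma beta_measurable[measurable (raw)]:
  "f \<in> M \<rightarrow>\<^sub>M borel \<Longrightarrow> g \<in> M \<rightarrow>\<^sub>M borel \<Longrightarrow> (\<lambda>x. beta (f x) (g x)) \<in> M \<rightarrow>\<^sub>M borel"
  unfolding beta_def by measurable

lemma cnj_ebar: "cnj (ebar t) = ebar (- t)"
  unfolding ebar_def by (simp add: cis_cnj)

lemma ebar_add: "ebar (s + t) = ebar s * ebar t"
  unfolding ebar_def cis_mult by (simp add: algebra_simps)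

lemma eta_lam_uminus: "eta_lam lam (- s) * (exp (lam * s) * exp (lam * s)) = - eta_lam lam s"
proof -
  define A where "A = exp (2 * lam * - s)"
  define B where "B = exp (lam * s) * exp (lam * s)"
  have AB: "A * B = 1" unfolding A_def B_def by (simp flip: exp_add)
  have B: "exp (2 * lam * s) = B" unfolding B_def by (simp flip: exp_add)
  have "eta_lam lam (- s) * B = ((A - 1) * B) / (2 * lam)"
    unfolding eta_lam_def A_def by simp
  also have "\<dots> = (1 - B) / (2 * lam)" using AB by (simp add: algebra_simps)
  also have "\<dots> = - eta_lam lam s" unfolding eta_lam_def B by (simp add: minus_divide_left)
  finally show ?thesis unfolding B_def .
qed

lemma ebar_Jhat_phase:
  "ebar (eta_lam lam (- s) * beta (exp (lam * s) *\<^sub>R x) (exp (lam * s) *\<^sub>R Y - exp (lam * s) *\<^sub>R y))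
   = cnj (ebar (eta_lam lam s * beta x (Y - y)))"
proof -
  have "eta_lam lam (- s) * beta (exp (lam * s) *\<^sub>R x) (exp (lam * s) *\<^sub>R Y - exp (lam * s) *\<^sub>R y)
      = (eta_lam lam (- s) * (exp (lam * s) * exp (lam * s))) * beta x (Y - y)"
    by (simp add: beta_def scaleR_diff_right[symmetric] inner_scaleR_left inner_scaleR_right)
  also have "\<dots> = - (eta_lam lam s * beta x (Y - y))" by (simp add: eta_lam_uminus)
  finally show ?thesis by (simp add: cnj_ebar)
qed

lemma ebar_Sfun_phase:
  "ebar (eta_lam lam (- s) * beta (- (exp (lam * s) *\<^sub>R u)) (exp (lam * s) *\<^sub>R Y))
   = ebar (eta_lam lam s * beta u v) * ebar (eta_lam lam s * beta u (Y - v))"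
proof -
  have "eta_lam lam (- s) * beta (- (exp (lam * s) *\<^sub>R u)) (exp (lam * s) *\<^sub>R Y)
      = - (eta_lam lam (- s) * (exp (lam * s) * exp (lam * s))) * beta u Y"
    by (simp add: beta_def inner_scaleR_left inner_scaleR_right)
  also have "\<dots> = eta_lam lam s * beta u v + eta_lam lam s * beta u (Y - v)"
    by (simp add: eta_lam_uminus beta_def inner_diff_right algebra_simps)
  finally show ?thesis by (simp add: ebar_add)
qed

section \<open>The slice of \<open>U\<^sub>A\<close> and the antipode\<close>

lemma tensor_measurable[measurable]:
  fixes a b :: "('n::finite) pt \<Rightarrow> complex"
  assumes [measurable]: "a \<in> borel_measurable borel" "b \<in> borel_measurable borel"
  shows "tensor a b \<in> borel_measurable borel"
  unfolding tensor_def case_prod_beta' by measurable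

lemma UA_apply: "UA lam \<xi> ((x, y, r), (x', y', r')) =
   complex_of_real (exp (- lam * r') ^ CARD('n))
   * ebar (eta_lam lam r' * beta (exp (- lam * r') *\<^sub>R x) (y' - exp (- lam * r') *\<^sub>R y))
   * \<xi> ((exp (- lam * r') *\<^sub>R x, exp (- lam * r') *\<^sub>R y, r + r'),
        (x' - exp (- lam * r') *\<^sub>R x, y' - exp (- lam * r') *\<^sub>R y, r'))"
  for \<xi> :: "('n::finite) pt \<times> 'n pt \<Rightarrow> complex"
  unfolding UA_def Let_def by simp

lemma UA_measurable[measurable]:
  fixes \<xi> :: "('n::finite) pt \<times> 'n pt \<Rightarrow> complex"
  assumes [measurable]: "\<xi> \<in> borel_measurable borel"
  shows "UA lam \<xi> \<in> borel_measurable borel"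
  unfolding UA_def Let_def case_prod_beta' by measurable

definition dilate :: "real \<Rightarrow> real \<Rightarrow> ('n::finite) pt \<Rightarrow> 'n pt" where
  "dilate lam s = (\<lambda>(x, y, r). (exp (lam * s) *\<^sub>R x, exp (lam * s) *\<^sub>R y, r - s))"

lemma change_of_vars_dilate:
  "change_of_vars (dilate lam s :: ('n::finite) pt \<Rightarrow> _) (\<lambda>_. exp (lam * s) ^ (2 * CARD('n)))"
proof -
  have "change_of_vars (\<lambda>r::real. r - s) (\<lambda>_. 1)"
    by (rule change_of_vars_cong[OF change_of_vars_affine[of 1 "- s"]]) auto
  then show ?thesis
    by (rule change_of_vars_cong[OF change_of_vars_prod[OF change_of_vars_scaleR_exp change_of_vars_prod[OF change_of_vars_scaleR_exp]]])
      (auto simp: dilate_def mult_2 power_add)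
qed

lemma UA_Jhat_pointwise:
  fixes a b \<zeta> \<zeta>' :: "('n::finite) pt \<Rightarrow> complex"
  shows "Jhat_jacobian lam q *\<^sub>R (UA lam (tensor a (Jhat lam \<zeta>')) (p, Jhat_map lam q)
            * cnj (tensor b (Jhat lam \<zeta>) (p, Jhat_map lam q)))
       = exp (lam * snd (snd q)) ^ (2 * CARD('n)) *\<^sub>R (tensor a \<zeta> (dilate lam (snd (snd q)) p, q)
            * cnj (UA lam (tensor b \<zeta>') (dilate lam (snd (snd q)) p, q)))"
proof -
  obtain x y r where p: "p = (x, y, r)" by (cases p)
  obtain X Y s where q: "q = (X, Y, s)" by (cases q)
  define E where "E = exp (lam * s)"
  define Ei where "Ei = exp (- (lam * s))"
  have EEi: "Ei * E = 1" "E * Ei = 1" unfolding E_def Ei_def by (simp_all add: exp_minus)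
  have e1: "exp (- lam * - s) = E" "exp (lam * - s) = Ei" "exp (- lam * s) = Ei" "exp (lam * s) = E"
    unfolding E_def Ei_def by simp_all
  have v1: "Ei *\<^sub>R (E *\<^sub>R v) = v" for v :: "real^'n" using EEi by simp
  have v2: "Ei *\<^sub>R (E *\<^sub>R X - E *\<^sub>R v) = X - v" for v X :: "real^'n"
    using EEi by (simp add: scaleR_diff_right)
  have ph: "ebar (eta_lam lam (- s) * beta (E *\<^sub>R x) (E *\<^sub>R Y - E *\<^sub>R y)) = cnj (ebar (eta_lam lam s * beta x (Y - y)))"
    using ebar_Jhat_phase unfolding E_def .
  have Epos: "E > 0" unfolding E_def by simp
  have Ei: "complex_of_real Ei = inverse (complex_of_real E)"
    unfolding Ei_def E_def by (simp add: exp_minus of_real_inverse)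
  have jac: "Jhat_jacobian lam (X, Y, s) = E ^ (2 * CARD('n))" unfolding Jhat_jacobian_def E_def by simp
  show ?thesis
    unfolding p q UA_apply Jhat_map_apply dilate_def tensor_def e1 prod.case snd_conv
    unfolding Jhat_apply e1 jac
    apply (simp only: v1 v2 prod.case ph minus_minus diff_add_cancel diff_conv_add_uminus[symmetric])
    apply (simp add: Ei scaleR_conv_of_real[where 'a=complex])
    using Epos apply (simp add: field_simps)
    done
qed

lemma ip_UA_Jhat:
  fixes a b \<zeta> \<zeta>' :: "('n::finite) pt \<Rightarrow> complex"
  assumes [measurable]: "a \<in> borel_measurable borel" "b \<in> borel_measurable borel"
    "\<zeta> \<in> borel_measurable borel" "\<zeta>' \<in> borel_measurable borel"
  shows "ip (UA lam (tensor a (Jhat lam \<zeta>'))) (tensor b (Jhat lam \<zeta>)) = ip (tensor a \<zeta>) (UA lam (tensor b \<zeta>'))"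
proof -
  define lhs where "lhs = (\<lambda>w. UA lam (tensor a (Jhat lam \<zeta>')) w * cnj (tensor b (Jhat lam \<zeta>) w))"
  define rhs where "rhs = (\<lambda>w. tensor a \<zeta> w * cnj (UA lam (tensor b \<zeta>') w))"
  have [measurable]: "lhs \<in> borel_measurable borel" unfolding lhs_def by measurable
  have [measurable]: "rhs \<in> borel_measurable borel" unfolding rhs_def by measurable
  have Jhat_snd: "change_of_vars (\<lambda>(p :: 'n pt, q :: 'n pt). (p, Jhat_map lam q)) (\<lambda>(p, q). Jhat_jacobian lam q)"
    by (rule change_of_vars_cong[OF change_of_vars_prod[OF change_of_vars_id change_of_vars_Jhat_map]]) auto
  have dilate_fst: "change_of_vars (\<lambda>(p :: 'n pt, q :: 'n pt). (dilate lam (snd (snd q)) p, q))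
      (\<lambda>(p, q). exp (lam * snd (snd q)) ^ (2 * CARD('n)))"
    by (rule change_of_vars_fibrewise_fst[OF change_of_vars_dilate]) (simp_all add: dilate_def case_prod_beta')
  have "ip (UA lam (tensor a (Jhat lam \<zeta>'))) (tensor b (Jhat lam \<zeta>)) = integral\<^sup>L lborel lhs"
    unfolding ip_def lhs_def ..
  also have "\<dots> = (\<integral>w. (case w of (p, q) \<Rightarrow> Jhat_jacobian lam q) *\<^sub>R lhs (case w of (p, q) \<Rightarrow> (p, Jhat_map lam q)) \<partial>lborel)"
    by (rule change_of_vars_integral[OF Jhat_snd]) measurable
  also have "\<dots> = (\<integral>w. (case w of (p, q) \<Rightarrow> exp (lam * snd (snd q)) ^ (2 * CARD('n))) *\<^sub>R
      rhs (case w of (p, q) \<Rightarrow> (dilate lam (snd (snd q)) p, q)) \<partial>lborel)"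
    by (rule Bochner_Integration.integral_cong[OF refl])
      (auto simp: lhs_def rhs_def UA_Jhat_pointwise split: prod.split)
  also have "\<dots> = integral\<^sup>L lborel rhs"
    by (rule change_of_vars_integral[OF dilate_fst, symmetric]) measurable
  also have "\<dots> = ip (tensor a \<zeta>) (UA lam (tensor b \<zeta>'))"
    unfolding ip_def rhs_def ..
  finally show ?thesis .
qed

lemma Jhat_slice_UA_adjoint:
  fixes \<xi>s :: "nat \<Rightarrow> ('n::finite) pt \<Rightarrow> complex"
  assumes rep: "normal_rep \<xi>s \<eta>s" and X: "slice_UA lam \<xi>s \<eta>s X" and Xs: "is_adjoint X Xs"
    and Y: "slice_UA_adj lam \<xi>s \<eta>s Y" and \<zeta>: "L2 \<zeta>" "L2 \<zeta>'"
  shows "ip (Jhat lam (Xs (Jhat lam \<zeta>))) \<zeta>' = ip (Y \<zeta>) \<zeta>'"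
proof -
  have J\<zeta>: "L2 (Jhat lam \<zeta>)" "L2 (Jhat lam \<zeta>')" using \<zeta> L2_Jhat by auto
  have XsJ\<zeta>: "L2 (Xs (Jhat lam \<zeta>))" using Xs J\<zeta> unfolding is_adjoint_def by auto
  have rep_L2: "L2 (\<xi>s k)" "L2 (\<eta>s k)" for k using rep unfolding normal_rep_def by auto
  note [measurable] = rep_L2[THEN L2_measurable] \<zeta>[THEN L2_measurable] XsJ\<zeta>[THEN L2_measurable]
  have "ip (Jhat lam (Xs (Jhat lam \<zeta>))) \<zeta>' = ip (Jhat lam \<zeta>') (Xs (Jhat lam \<zeta>))"
    by (rule ip_Jhat_swap; measurable)
  also have "\<dots> = cnj (ip (Jhat lam \<zeta>) (X (Jhat lam \<zeta>')))"
    using Xs J\<zeta> unfolding is_adjoint_def by (simp add: ip_commute[of "Jhat lam \<zeta>'"])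
  also have "\<dots> = (\<Sum>k. ip (UA lam (tensor (\<xi>s k) (Jhat lam \<zeta>'))) (tensor (\<eta>s k) (Jhat lam \<zeta>)))"
    using X J\<zeta> unfolding slice_UA_def by (simp add: ip_commute[of "Jhat lam \<zeta>"])
  also have "\<dots> = (\<Sum>k. ip (tensor (\<xi>s k) \<zeta>) (UA lam (tensor (\<eta>s k) \<zeta>')))"
    by (simp add: ip_UA_Jhat)
  also have "\<dots> = ip (Y \<zeta>) \<zeta>'"
    using Y \<zeta> unfolding slice_UA_adj_def by auto
  finally show ?thesis .
qed

section \<open>The convolution operators \<open>L\<^sub>f\<close>\<close>

definition Lf_integrand :: "real \<Rightarrow> (('n::finite) pt \<Rightarrow> complex) \<Rightarrow> ('n pt \<Rightarrow> complex) \<Rightarrow> ('n pt \<Rightarrow> complex)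
    \<Rightarrow> ('n pt \<times> ((real^'n) \<times> (real^'n)) \<Rightarrow> complex)" where
  "Lf_integrand lam f g1 g2 = (\<lambda>((x, y, r), (u, v)). f (u, v, r) * g1 (x - u, y - v, r)
        * ebar (eta_lam lam r * beta u (y - v)) * cnj (g2 (x, y, r)))"

lemma Lf_integrand_measurable[measurable]:
  fixes f g1 g2 :: "('n::finite) pt \<Rightarrow> complex"
  assumes [measurable]: "f \<in> borel_measurable borel" "g1 \<in> borel_measurable borel" "g2 \<in> borel_measurable borel"
  shows "Lf_integrand lam f g1 g2 \<in> borel_measurable borel"
  unfolding Lf_integrand_def case_prod_beta' by measurable

lemma ip_Lf_eq_integral:
  fixes f g1 g2 :: "('n::finite) pt \<Rightarrow> complex"
  assumes "integrable lborel (Lf_integrand lam f g1 g2)"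
  shows "ip (Lf lam f g1) g2 = integral\<^sup>L lborel (Lf_integrand lam f g1 g2)"
proof -
  have "ip (Lf lam f g1) g2 = (\<integral>p. (\<integral>q. Lf_integrand lam f g1 g2 (p, q) \<partial>lborel) \<partial>lborel)"
    unfolding ip_def
  proof (rule Bochner_Integration.integral_cong[OF refl])
    fix p :: "'n pt"
    obtain x y r where p: "p = (x, y, r)" by (cases p)
    show "Lf lam f g1 p * cnj (g2 p) = (\<integral>q. Lf_integrand lam f g1 g2 (p, q) \<partial>lborel)"
      unfolding p Lf_def Lf_integrand_def prod.case
      by (subst integral_mult_left_zero[symmetric]) (simp add: case_prod_beta')
  qed
  also have "\<dots> = integral\<^sup>L (lborel \<Otimes>\<^sub>M lborel) (Lf_integrand lam f g1 g2)"
    by (rule lborel_pair.integral_fst') (simp add: lborel_prod assms)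
  also have "\<dots> = integral\<^sup>L lborel (Lf_integrand lam f g1 g2)" by (simp add: lborel_prod)
  finally show ?thesis .
qed

lemma change_of_vars_shear:
  "change_of_vars (\<lambda>((x, y, r), (u, v)). ((x - u, y - v, r), (u, v)) :: ('n::finite) pt \<times> ((real^'n) \<times> (real^'n))) (\<lambda>_. 1)"
proof -
  have "change_of_vars (\<lambda>(x, y, r). (x - fst q, y - snd q, r) :: 'n pt) (\<lambda>_. 1)" for q :: "(real^'n) \<times> (real^'n)"
    by (rule change_of_vars_cong[OF change_of_vars_affine[of 1 "- (fst q, snd q, 0) :: 'n pt"]]) (auto split: prod.split)
  then show ?thesis
    by (rule change_of_vars_cong[OF change_of_vars_fibrewise_fst[of "\<lambda>q. \<lambda>(x, y, r). (x - fst q, y - snd q, r)" "\<lambda>_ _. 1"]])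
      (auto simp: case_prod_beta')
qed

lemma L1type_measurable: "L1type f \<Longrightarrow> f \<in> borel_measurable borel"
  unfolding L1type_def by simp

lemma L1type_nn_integral_bounded:
  fixes f :: "('n::finite) pt \<Rightarrow> complex"
  assumes "L1type f"
  obtains C where "\<And>r. (\<integral>\<^sup>+q. ennreal (cmod (f (fst q, snd q, r))) \<partial>(lborel :: ((real^'n) \<times> (real^'n)) measure)) \<le> ennreal C"
proof -
  obtain C where C: "\<And>r. integral\<^sup>L (lborel :: ((real^'n) \<times> (real^'n)) measure) (\<lambda>(a, b). cmod (f (a, b, r))) \<le> C"
    using assms unfolding L1type_def by blast
  have "(\<integral>\<^sup>+q. ennreal (cmod (f (fst q, snd q, r))) \<partial>(lborel :: ((real^'n) \<times> (real^'n)) measure)) \<le> ennreal C" for r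
  proof -
    have "integrable (lborel :: ((real^'n) \<times> (real^'n)) measure) (\<lambda>(a, b). f (a, b, r))"
      using assms unfolding L1type_def by blast
    then have int: "integrable (lborel :: ((real^'n) \<times> (real^'n)) measure) (\<lambda>q. cmod (f (fst q, snd q, r)))"
      using integrable_norm by (simp add: case_prod_beta')
    have "(\<integral>\<^sup>+q. ennreal (cmod (f (fst q, snd q, r))) \<partial>(lborel :: ((real^'n) \<times> (real^'n)) measure))
        = ennreal (integral\<^sup>L lborel (\<lambda>q. cmod (f (fst q, snd q, r))))"
      by (rule nn_integral_eq_integral[OF int]) simp
    also have "\<dots> \<le> ennreal C" using C[of r] by (intro ennreal_leI) (simp add: case_prod_beta')
    finally show ?thesis .
  qed
  then show ?thesis using that by blast
qed

lemma nn_integral_L1type_times_L2_finite: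
  fixes f g :: "('n::finite) pt \<Rightarrow> complex"
  assumes f: "L1type f" and g: "L2 g"
  shows "(\<integral>\<^sup>+z. ennreal (cmod (f (fst (snd z), snd (snd z), snd (snd (fst z)))) * (cmod (g (fst z)))^2)
      \<partial>(lborel :: ('n pt \<times> ((real^'n) \<times> (real^'n))) measure)) < \<infinity>"
proof -
  obtain C where C: "\<And>r. (\<integral>\<^sup>+q. ennreal (cmod (f (fst q, snd q, r))) \<partial>(lborel :: ((real^'n) \<times> (real^'n)) measure)) \<le> ennreal C"
    using L1type_nn_integral_bounded[OF f] by blast
  have [measurable]: "f \<in> borel_measurable borel" "g \<in> borel_measurable borel"
    using f g by (simp_all add: L1type_measurable L2_measurable)
  have g2: "integrable lborel (\<lambda>p. (cmod (g p))^2)" using g unfolding L2_def by simp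
  have m: "(\<lambda>z. ennreal (cmod (f (fst (snd z), snd (snd z), snd (snd (fst z)))) * (cmod (g (fst z)))^2))
     \<in> borel_measurable ((lborel :: 'n pt measure) \<Otimes>\<^sub>M (lborel :: ((real^'n) \<times> (real^'n)) measure))"
    unfolding lborel_prod by measurable
  have "(\<integral>\<^sup>+z. ennreal (cmod (f (fst (snd z), snd (snd z), snd (snd (fst z)))) * (cmod (g (fst z)))^2)
      \<partial>(lborel :: ('n pt \<times> ((real^'n) \<times> (real^'n))) measure))
    = (\<integral>\<^sup>+p. \<integral>\<^sup>+q. ennreal ((cmod (g p))^2) * ennreal (cmod (f (fst q, snd q, snd (snd p)))) \<partial>lborel \<partial>lborel)"
  proof -
    have eq: "(lborel :: ('n pt \<times> ((real^'n) \<times> (real^'n))) measure) = lborel \<Otimes>\<^sub>M lborel"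
      by (simp add: lborel_prod)
    show ?thesis
      unfolding eq lborel.nn_integral_fst[OF m, symmetric]
      by (intro nn_integral_cong) (simp add: ennreal_mult mult.commute)
  qed
  also have "\<dots> = (\<integral>\<^sup>+p. ennreal ((cmod (g p))^2) * (\<integral>\<^sup>+q. ennreal (cmod (f (fst q, snd q, snd (snd p)))) \<partial>lborel) \<partial>lborel)"
    by (intro nn_integral_cong nn_integral_cmult) simp
  also have "\<dots> \<le> (\<integral>\<^sup>+p. ennreal ((cmod (g p))^2) * ennreal C \<partial>lborel)"
    by (intro nn_integral_mono mult_left_mono C) simp
  also have "\<dots> = ennreal (integral\<^sup>L lborel (\<lambda>p. (cmod (g p))^2)) * ennreal C"
    by (simp add: nn_integral_multc nn_integral_eq_integral[OF g2])
  also have "\<dots> < \<infinity>" by (simp add: ennreal_mult_less_top)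
  finally show ?thesis .
qed

lemma integrable_Lf_integrand:
  fixes f g1 g2 :: "('n::finite) pt \<Rightarrow> complex"
  assumes f: "L1type f" and g1: "L2 g1" and g2: "L2 g2"
  shows "integrable lborel (Lf_integrand lam f g1 g2)"
proof -
  have [measurable]: "f \<in> borel_measurable borel" "g1 \<in> borel_measurable borel" "g2 \<in> borel_measurable borel"
    using f g1 g2 by (simp_all add: L1type_measurable L2_measurable)
  define h where "h = (\<lambda>g (z::'n pt \<times> ((real^'n) \<times> (real^'n))).
    cmod (f (fst (snd z), snd (snd z), snd (snd (fst z)))) * (cmod (g (fst z)))^2)"
  define shear :: "'n pt \<times> ((real^'n) \<times> (real^'n)) \<Rightarrow> _"
    where "shear = (\<lambda>((x, y, r), (u, v)). ((x - u, y - v, r), (u, v)))"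
  have [measurable]: "h g1 \<in> borel_measurable borel" "h g2 \<in> borel_measurable borel"
    unfolding h_def by measurable
  have [measurable]: "shear \<in> borel_measurable borel"
    unfolding shear_def by (rule change_of_vars_measurable(1)[OF change_of_vars_shear])
  have h_finite: "(\<integral>\<^sup>+z. ennreal (h g z) \<partial>lborel) < \<infinity>" if "L2 g" for g
    unfolding h_def by (rule nn_integral_L1type_times_L2_finite[OF f that])
  have shear_h: "(\<integral>\<^sup>+z. ennreal 1 * ennreal (h g1 (shear z)) \<partial>lborel) = (\<integral>\<^sup>+z. ennreal (h g1 z) \<partial>lborel)"
    unfolding shear_def by (rule change_of_vars_nn_integral[OF change_of_vars_shear]) measurable
  have bound: "ennreal (norm (Lf_integrand lam f g1 g2 z)) \<le> ennreal (h g1 (shear z)) + ennreal (h g2 z)" for z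
  proof -
    obtain x y r u v where z: "z = ((x, y, r), (u, v))" by (cases z) auto
    define a where "a = cmod (g1 (x - u, y - v, r))"
    define b where "b = cmod (g2 (x, y, r))"
    have "0 \<le> a * b" by (simp add: a_def b_def)
    then have "a * b \<le> a^2 + b^2"
      using sum_squares_bound[of a b] by linarith
    moreover have "norm (Lf_integrand lam f g1 g2 z) = cmod (f (u, v, r)) * (a * b)"
      unfolding z Lf_integrand_def a_def b_def by (simp add: norm_mult ebar_def)
    ultimately have "norm (Lf_integrand lam f g1 g2 z) \<le> cmod (f (u, v, r)) * (a^2 + b^2)"
      by (simp add: mult_left_mono)
    also have "\<dots> = h g1 (shear z) + h g2 z"
      unfolding z h_def shear_def a_def b_def by (simp add: distrib_left)
    finally show ?thesis
      by (simp add: h_def ennreal_plus[symmetric] del: ennreal_plus)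
  qed
  have "(\<integral>\<^sup>+z. ennreal (norm (Lf_integrand lam f g1 g2 z)) \<partial>lborel)
      \<le> (\<integral>\<^sup>+z. ennreal (h g1 (shear z)) + ennreal (h g2 z) \<partial>lborel)"
    by (intro nn_integral_mono bound)
  also have "\<dots> = (\<integral>\<^sup>+z. ennreal (h g1 (shear z)) \<partial>lborel) + (\<integral>\<^sup>+z. ennreal (h g2 z) \<partial>lborel)"
    by (rule nn_integral_add) measurable
  also have "\<dots> < \<infinity>" using shear_h h_finite g1 g2 by simp
  finally show ?thesis unfolding integrable_iff_bounded by simp
qed

text \<open>A shear in the convolution variable \<open>(u, v)\<close>, followed by \<open>Jhat_map\<close> on the point and the
  dilation of \<open>(u, v)\<close> by \<open>-exp (lam * r)\<close>: this is the substitution turning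
  \<open>\<langle>L\<^sub>f (J \<zeta>'), J \<zeta>\<rangle>\<close> into \<open>\<langle>L\<^bsub>Sf\<^esub> \<zeta>, \<zeta>'\<rangle>\<close>.\<close>

definition antipode_subst :: "real \<Rightarrow> ('n::finite) pt \<times> ((real^'n) \<times> (real^'n)) \<Rightarrow> 'n pt \<times> ((real^'n) \<times> (real^'n))" where
  "antipode_subst lam = (\<lambda>((x, y, r), (u, v)).
     ((exp (lam * r) *\<^sub>R (x - u), exp (lam * r) *\<^sub>R (y - v), - r), (- (exp (lam * r) *\<^sub>R u), - (exp (lam * r) *\<^sub>R v))))"

lemma change_of_vars_antipode_subst:
  "change_of_vars (antipode_subst lam :: ('n::finite) pt \<times> _ \<Rightarrow> _) (\<lambda>((x, y, r), _). exp (lam * r) ^ (4 * CARD('n)))"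
proof -
  have "change_of_vars (\<lambda>w :: (real^'n) \<times> (real^'n). 0 + (- exp (lam * snd (snd p))) *\<^sub>R w)
      (\<lambda>_. \<bar>- exp (lam * snd (snd p))\<bar> ^ DIM((real^'n) \<times> (real^'n)))" for p :: "'n pt"
    by (rule change_of_vars_affine) simp
  then have scale_snd: "change_of_vars (\<lambda>(p :: 'n pt, w :: (real^'n) \<times> (real^'n)). (p, 0 + (- exp (lam * snd (snd p))) *\<^sub>R w))
      (\<lambda>(p, w). \<bar>- exp (lam * snd (snd p))\<bar> ^ DIM((real^'n) \<times> (real^'n)))"
    by (rule change_of_vars_fibrewise_snd) (auto simp: case_prod_beta')
  have Jhat_fst: "change_of_vars (\<lambda>(p :: 'n pt, w :: (real^'n) \<times> (real^'n)). (Jhat_map lam p, w)) (\<lambda>(p, w). Jhat_jacobian lam p * 1)"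
    by (rule change_of_vars_prod[OF change_of_vars_Jhat_map change_of_vars_id])
  show ?thesis
    by (rule change_of_vars_cong[OF change_of_vars_compose[OF Jhat_fst change_of_vars_compose[OF scale_snd change_of_vars_shear]]])
      (auto simp: Jhat_map_def antipode_subst_def scaleR_diff_right Jhat_jacobian_def power_add[symmetric]
        split: prod.split)
qed

lemma Lf_integrand_antipode_subst:
  fixes f \<zeta> \<zeta>' :: "('n::finite) pt \<Rightarrow> complex"
  shows "exp (lam * s) ^ (4 * CARD('n)) *\<^sub>R Lf_integrand lam f (Jhat lam \<zeta>') (Jhat lam \<zeta>) (antipode_subst lam ((X, Y, s), (u, v)))
    = Lf_integrand lam (Sfun lam f) \<zeta> \<zeta>' ((X, Y, s), (u, v))"
proof -
  define E where "E = exp (lam * s)"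
  define Ei where "Ei = exp (- (lam * s))"
  have EEi: "Ei * E = 1" "E * Ei = 1" unfolding E_def Ei_def by (simp_all add: exp_minus)
  have e1: "exp (lam * - s) = Ei" "exp (lam * s) = E"
    unfolding E_def Ei_def by simp_all
  have e2: "exp (2 * lam * s) = E * E" unfolding E_def by (simp flip: exp_add)
  have v1: "Ei *\<^sub>R (E *\<^sub>R w) = w" for w :: "real^'n" using EEi by simp
  have v3: "E *\<^sub>R (X - w) - - (E *\<^sub>R w) = E *\<^sub>R X" for w X :: "real^'n"
    by (simp add: scaleR_diff_right)
  have ph: "ebar (eta_lam lam (- s) * beta (- (E *\<^sub>R u)) (E *\<^sub>R Y))
      = ebar (eta_lam lam s * beta u v) * ebar (eta_lam lam s * beta u (Y - v))"
    using ebar_Sfun_phase unfolding E_def .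
  have Epos: "E > 0" unfolding E_def by simp
  have Ei: "complex_of_real Ei = inverse (complex_of_real E)"
    unfolding Ei_def E_def by (simp add: exp_minus of_real_inverse)
  show ?thesis
    unfolding antipode_subst_def Lf_integrand_def prod.case e1
    unfolding Jhat_apply Sfun_def prod.case e1 e2 v3
    apply (simp only: v1 prod.case ph minus_minus)
    apply (simp add: Ei scaleR_conv_of_real[where 'a=complex])
    using Epos apply (simp add: field_simps)
    apply (simp add: power_mult power4_eq_xxxx mult.assoc)
    done
qed

lemma ip_Lf_Jhat:
  fixes f \<zeta> \<zeta>' :: "('n::finite) pt \<Rightarrow> complex"
  assumes f: "L1type f" and \<zeta>: "L2 \<zeta>" "L2 \<zeta>'"
  shows "ip (Lf lam f (Jhat lam \<zeta>')) (Jhat lam \<zeta>) = ip (Lf lam (Sfun lam f) \<zeta>) \<zeta>'"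
proof -
  have [measurable]: "f \<in> borel_measurable borel" "\<zeta> \<in> borel_measurable borel" "\<zeta>' \<in> borel_measurable borel"
    using f \<zeta> by (simp_all add: L1type_measurable L2_measurable)
  have subst: "(\<lambda>w. (\<lambda>((x, y, r), _). exp (lam * r) ^ (4 * CARD('n))) w
        *\<^sub>R Lf_integrand lam f (Jhat lam \<zeta>') (Jhat lam \<zeta>) (antipode_subst lam w))
      = Lf_integrand lam (Sfun lam f) \<zeta> \<zeta>'"
    by (auto simp: Lf_integrand_antipode_subst split: prod.split)
  have int: "integrable lborel (Lf_integrand lam f (Jhat lam \<zeta>') (Jhat lam \<zeta>))"
    by (rule integrable_Lf_integrand[OF f L2_Jhat[OF \<zeta>(2)] L2_Jhat[OF \<zeta>(1)]])
  then have int': "integrable lborel (Lf_integrand lam (Sfun lam f) \<zeta> \<zeta>')"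
    using change_of_vars_integrable_iff[OF change_of_vars_antipode_subst[of lam], of "Lf_integrand lam f (Jhat lam \<zeta>') (Jhat lam \<zeta>)"]
    unfolding subst by simp
  have "ip (Lf lam f (Jhat lam \<zeta>')) (Jhat lam \<zeta>) = integral\<^sup>L lborel (Lf_integrand lam f (Jhat lam \<zeta>') (Jhat lam \<zeta>))"
    by (rule ip_Lf_eq_integral[OF int])
  also have "\<dots> = integral\<^sup>L lborel (Lf_integrand lam (Sfun lam f) \<zeta> \<zeta>')"
    using change_of_vars_integral[OF change_of_vars_antipode_subst[of lam], of "Lf_integrand lam f (Jhat lam \<zeta>') (Jhat lam \<zeta>)"]
    unfolding subst by simp
  also have "\<dots> = ip (Lf lam (Sfun lam f) \<zeta>) \<zeta>'"
    by (rule ip_Lf_eq_integral[OF int', symmetric])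
  finally show ?thesis .
qed

lemma slice_UA_adj_Lf_Sfun:
  fixes \<xi> \<eta> f :: "('n::finite) pt \<Rightarrow> complex"
  assumes "L2 \<xi>" "L2 \<eta>" "L1type f"
    and slice: "\<And>\<zeta> \<zeta>'. L2 \<zeta> \<Longrightarrow> L2 \<zeta>' \<Longrightarrow> ip (UA lam (tensor \<xi> \<zeta>)) (tensor \<eta> \<zeta>') = ip (Lf lam f \<zeta>) \<zeta>'"
    and \<zeta>: "L2 \<zeta>" "L2 \<zeta>'"
  shows "ip (tensor \<xi> \<zeta>) (UA lam (tensor \<eta> \<zeta>')) = ip (Lf lam (Sfun lam f) \<zeta>) \<zeta>'"
proof -
  have "ip (tensor \<xi> \<zeta>) (UA lam (tensor \<eta> \<zeta>')) = ip (UA lam (tensor \<xi> (Jhat lam \<zeta>'))) (tensor \<eta> (Jhat lam \<zeta>))"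
    using assms by (simp add: ip_UA_Jhat L2_measurable)
  also have "\<dots> = ip (Lf lam f (Jhat lam \<zeta>')) (Jhat lam \<zeta>)"
    using slice L2_Jhat \<zeta> by blast
  also have "\<dots> = ip (Lf lam (Sfun lam f) \<zeta>) \<zeta>'"
    using ip_Lf_Jhat assms by blast
  finally show ?thesis .
qed

theorem mainTheorem12:
  fixes lam :: real
  assumes "lam \<noteq> 0"
  shows
   "(\<forall>(\<xi>s :: nat \<Rightarrow> ('n::finite) pt \<Rightarrow> complex) \<eta>s X Xs Y.
       normal_rep \<xi>s \<eta>s \<and> slice_UA lam \<xi>s \<eta>s X \<and> is_adjoint X Xs
       \<and> slice_UA_adj lam \<xi>s \<eta>s Y \<longrightarrow>
       (\<forall>\<zeta> \<zeta>'. L2 \<zeta> \<longrightarrow> L2 \<zeta>' \<longrightarrow> ip (Jhat lam (Xs (Jhat lam \<zeta>))) \<zeta>' = ip (Y \<zeta>) \<zeta>'))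
    \<and> (\<forall>(\<xi> :: 'n pt \<Rightarrow> complex) \<eta> f.
       L2 \<xi> \<and> L2 \<eta> \<and> L1type f
       \<and> (\<forall>\<zeta> \<zeta>'. L2 \<zeta> \<longrightarrow> L2 \<zeta>' \<longrightarrow>
             ip (UA lam (tensor \<xi> \<zeta>)) (tensor \<eta> \<zeta>') = ip (Lf lam f \<zeta>) \<zeta>') \<longrightarrow>
       (\<forall>\<zeta> \<zeta>'. L2 \<zeta> \<longrightarrow> L2 \<zeta>' \<longrightarrow>
             ip (tensor \<xi> \<zeta>) (UA lam (tensor \<eta> \<zeta>')) = ip (Lf lam (Sfun lam f) \<zeta>) \<zeta>'))"
  using Jhat_slice_UA_adjoint slice_UA_adj_Lf_Sfun by blast

end
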